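(* Let $\mathbb{X}$ be a finite-dimensional smooth real Banach space (of dimension at least $2$). Then there exist $x,y\in S_{\mathbb{X}}$ with $y\neq\pm x$ such that $(x,y)$ is a weak CPP.
   Context: $S_{\mathbb{X}}$ is the unit sphere; $B(x,r)=\{u:\|u-x\|<r\}$. $x\perp_B y$ means $\|x+\lambda y\|\ge\|x\|$ for all real $\lambda$; $x^\perp=\{y:x\perp_B y\}$. For $x,y\in S_{\mathbb{X}}$, $(x,y)$ is a weak CPP if there exist $z\in x^\perp\cap S_{\mathbb{X}}$, $w\in y^\perp\cap S_{\mathbb{X}}$, $r>0$, $\mu>0$ such that for all $a,b\in\mathbb{R}$, $ax+bz\in B(x,r)\cap S_{\mathbb{X}}$ implies $\|ay+b\mu w\|\le1$. *)

theory Defs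
  imports "HOL-Analysis.Analysis"
begin

definition birkhoff_orth :: "'a::real_normed_vector \<Rightarrow> 'a \<Rightarrow> bool" where
  "birkhoff_orth x y \<longleftrightarrow> (\<forall>t::real. norm (x + t *\<^sub>R y) \<ge> norm x)"

definition support_functional :: "'a::real_normed_vector \<Rightarrow> ('a \<Rightarrow> real) \<Rightarrow> bool" where
  "support_functional x f \<longleftrightarrow> linear f \<and> (\<forall>u. \<bar>f u\<bar> \<le> norm u) \<and> f x = 1"

definition smooth_space :: "'a::real_normed_vector itself \<Rightarrow> bool" where
  "smooth_space TYPE('a) \<longleftrightarrow>
     (\<forall>x::'a. norm x = 1 \<longrightarrow> (\<exists>!f. support_functional x f))"

definition weak_CPP :: "'a::real_normed_vector \<Rightarrow> 'a \<Rightarrow> bool" where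
  "weak_CPP x y \<longleftrightarrow>
     (\<exists>z w r \<mu>. birkhoff_orth x z \<and> norm z = 1 \<and> birkhoff_orth y w \<and> norm w = 1
        \<and> r > 0 \<and> \<mu> > 0 \<and>
        (\<forall>a b::real. (a *\<^sub>R x + b *\<^sub>R z \<in> ball x r \<and> norm (a *\<^sub>R x + b *\<^sub>R z) = 1)
            \<longrightarrow> norm (a *\<^sub>R y + b *\<^sub>R (\<mu> *\<^sub>R w)) \<le> 1))"

end

theory Submission
  imports Defs
begin

(* Fix a basis and let |v| be the Euclidean norm of the coordinates of v.  The Euclidean unit
   sphere is compact, so the ratio ||v|| / |v| attains its minimum at some x and its maximum at
   some y, normalised to ||x|| = ||y|| = 1.  Because x minimises the ratio, every direction z that
   is Euclidean-orthogonal to x is Birkhoff orthogonal to x.  Because y maximises it, the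
   Euclidean ball of radius |y| lies inside the unit ball and touches it at y, so the support
   functional at y vanishes on the Euclidean tangent direction w, and y is Birkhoff orthogonal
   to w.  On span {x, z} the norm dominates the ellipse norm sqrt (a^2 + (b |z| / |x|)^2) of
   a x + b z, on span {y, w} it is dominated by the ellipse norm of a y + b mu w, and a suitable
   mu makes the two ellipses equal: this is the weak CPP.  Finally y differs from +-x unless the
   ratio is constant, i.e. the norm is Euclidean, and then y may be taken orthogonal to x. *)

lemma compact_unit_cube: "compact (PiE UNIV (\<lambda>_::'a. {-1..1::real}))"
proof -
  have "compactin (product_topology (\<lambda>_::'a. euclidean) UNIV) (PiE UNIV (\<lambda>_::'a. {-1..1::real}))"
    by (simp add: compactin_PiE)
  then show ?thesis
    by (simp add: euclidean_product_topology)
qed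

lemma slope_eq_0_if_below_hyperbola:
  fixes k c :: real
  assumes below: "\<And>t. 1 + t * k \<le> sqrt (1 + (t * c)\<^sup>2)"
  shows "k = 0"
proof -
  have tangent: "t * k \<le> (t * c)\<^sup>2 / 2" for t
  proof -
    have "1 + s \<le> (1 + s / 2)\<^sup>2" for s :: real
      using zero_le_power2[of s] by (simp add: power2_eq_square field_simps)
    then have "sqrt (1 + (t * c)\<^sup>2) \<le> sqrt ((1 + (t * c)\<^sup>2 / 2)\<^sup>2)"
      by (intro real_sqrt_le_mono)
    then show ?thesis
      using below[of t] by simp
  qed
  define q where "q = 1 + c\<^sup>2"
  have "0 < q"
    by (simp add: q_def add_pos_nonneg)
  from tangent[of "k / q"] have "k\<^sup>2 / q \<le> k\<^sup>2 * c\<^sup>2 / (2 * q\<^sup>2)"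
    by (simp add: power_mult_distrib power_divide power2_eq_square mult_ac)
  then have "2 * q * k\<^sup>2 \<le> k\<^sup>2 * c\<^sup>2"
    using \<open>0 < q\<close> by (simp add: field_simps power2_eq_square)
  then have "k\<^sup>2 * (2 + c\<^sup>2) \<le> 0"
    by (simp add: q_def algebra_simps)
  moreover have "0 < 2 + c\<^sup>2"
    by (simp add: add_pos_nonneg)
  ultimately show "k = 0"
    by (simp add: mult_le_0_iff)
qed

lemma birkhoff_orth_if_support_functional:
  assumes "support_functional y f" "norm y = 1" "f w = 0"
  shows "birkhoff_orth y w"
  unfolding birkhoff_orth_def
proof
  fix t :: real
  have "f (y + t *\<^sub>R w) = 1"
    using assms by (simp add: support_functional_def linear_add linear_scale)
  then show "norm y \<le> norm (y + t *\<^sub>R w)"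
    using assms(1,2) by (auto simp: support_functional_def dest: spec[of _ "y + t *\<^sub>R w"])
qed

locale finite_basis =
  fixes B :: "'a::real_normed_vector set"
  assumes finite_B: "finite B" and independent_B: "independent B" and span_B: "span B = UNIV"
begin

abbreviation coord :: "'a \<Rightarrow> 'a \<Rightarrow> real" where
  "coord v \<equiv> real_vector.representation B v"

definition coord_inner :: "'a \<Rightarrow> 'a \<Rightarrow> real" where
  "coord_inner u v = (\<Sum>b\<in>B. coord u b * coord v b)"

definition coord_norm :: "'a \<Rightarrow> real" where
  "coord_norm v = sqrt (coord_inner v v)"

lemma coord_add: "coord (u + v) = (\<lambda>b. coord u b + coord v b)"
  using independent_B span_B by (simp add: real_vector.representation_add)

lemma coord_scaleR: "coord (a *\<^sub>R v) = (\<lambda>b. a * coord v b)"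
  using independent_B span_B by (simp add: real_vector.representation_scale)

lemma coord_lincomb: "b \<in> B \<Longrightarrow> coord (\<Sum>b'\<in>B. c b' *\<^sub>R b') b = c b"
  using independent_B span_B
  by (simp add: real_vector.representation_sum coord_scaleR real_vector.representation_basis
      real_vector.span_base if_distrib[of "\<lambda>x. _ * x"] finite_B cong: if_cong)

lemma lincomb_coord: "(\<Sum>b\<in>B. coord v b *\<^sub>R b) = v"
  using independent_B span_B finite_B by (simp add: real_vector.sum_representation_eq)

lemma coord_inner_commute: "coord_inner u v = coord_inner v u"
  by (simp add: coord_inner_def mult.commute)

lemma coord_inner_add_left: "coord_inner (u + v) w = coord_inner u w + coord_inner v w"
  by (simp add: coord_inner_def coord_add distrib_right sum.distrib)

lemma coord_inner_add_right: "coord_inner u (v + w) = coord_inner u v + coord_inner u w"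
  using coord_inner_add_left coord_inner_commute by metis

lemma coord_inner_scaleR_left: "coord_inner (a *\<^sub>R u) v = a * coord_inner u v"
  by (simp add: coord_inner_def coord_scaleR sum_distrib_left mult.assoc)

lemma coord_inner_scaleR_right: "coord_inner u (a *\<^sub>R v) = a * coord_inner u v"
  using coord_inner_scaleR_left coord_inner_commute by metis

lemma coord_inner_self_nonneg: "0 \<le> coord_inner v v"
  by (simp add: coord_inner_def sum_nonneg)

lemma coord_inner_self_eq_0: "coord_inner v v = 0 \<longleftrightarrow> v = 0"
proof
  assume "coord_inner v v = 0"
  then have "\<forall>b\<in>B. coord v b = 0"
    by (simp add: coord_inner_def finite_B sum_nonneg_eq_0_iff)
  then show "v = 0"
    using lincomb_coord[of v] by simp
qed (simp add: coord_inner_def real_vector.representation_zero)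

lemma coord_inner_orthogonal_combination:
  assumes "coord_inner u v = 0"
  shows "coord_inner (a *\<^sub>R u + b *\<^sub>R v) (a *\<^sub>R u + b *\<^sub>R v)
    = a\<^sup>2 * coord_inner u u + b\<^sup>2 * coord_inner v v"
  using assms coord_inner_commute[of v u]
  by (simp add: coord_inner_add_left coord_inner_add_right coord_inner_scaleR_left coord_inner_scaleR_right
      power2_eq_square)

lemma coord_inner_basis_right: "b \<in> B \<Longrightarrow> coord_inner u b = coord u b"
  using independent_B finite_B
  by (simp add: coord_inner_def real_vector.representation_basis if_distrib[of "\<lambda>x. _ * x"] cong: if_cong)

lemma coord_norm_scaleR: "coord_norm (a *\<^sub>R v) = \<bar>a\<bar> * coord_norm v"
  by (simp add: coord_norm_def coord_inner_scaleR_left coord_inner_scaleR_right real_sqrt_mult)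

lemma coord_norm_0 [simp]: "coord_norm 0 = 0"
  by (simp add: coord_norm_def coord_inner_self_eq_0)

lemma coord_norm_pos: "v \<noteq> 0 \<Longrightarrow> 0 < coord_norm v"
  using coord_inner_self_nonneg[of v] coord_inner_self_eq_0[of v] by (simp add: coord_norm_def)

lemma coord_norm_orthogonal_combination:
  assumes "coord_inner u v = 0"
  shows "coord_norm (a *\<^sub>R u + b *\<^sub>R v)
    = sqrt (a\<^sup>2 * (coord_norm u)\<^sup>2 + b\<^sup>2 * (coord_norm v)\<^sup>2)"
  using assms by (simp add: coord_norm_def coord_inner_orthogonal_combination coord_inner_self_nonneg)

lemma compact_coord_norm_sphere: "compact {v. coord_norm v = 1}"
proof -
  let ?lincomb = "\<lambda>c. \<Sum>b\<in>B. c b *\<^sub>R b"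
  define S where "S = PiE UNIV (\<lambda>_. {-1..1}) \<inter> {c. (\<Sum>b\<in>B. (c b)\<^sup>2) = (1::real)}"
  have "closed {c. (\<Sum>b\<in>B. (c b)\<^sup>2) = (1::real)}"
    by (intro closed_Collect_eq continuous_intros continuous_on_product_coordinates)
  then have compact_S: "compact S"
    unfolding S_def using compact_unit_cube compact_Int_closed by blast
  have continuous_lincomb: "continuous_on UNIV ?lincomb"
    by (intro continuous_intros continuous_on_product_coordinates)
  have "?lincomb ` S = {v. coord_norm v = 1}"
  proof
    show "?lincomb ` S \<subseteq> {v. coord_norm v = 1}"
      by (auto simp: S_def coord_norm_def coord_inner_def coord_lincomb power2_eq_square cong: sum.cong)
    show "{v. coord_norm v = 1} \<subseteq> ?lincomb ` S"
    proof
      fix v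
      assume "v \<in> {v. coord_norm v = 1}"
      then have sum_sq: "(\<Sum>b\<in>B. (coord v b)\<^sup>2) = 1"
        by (simp add: coord_norm_def coord_inner_def power2_eq_square)
      have "\<bar>coord v b\<bar> \<le> 1" for b
      proof (cases "b \<in> B")
        case True
        then have "(coord v b)\<^sup>2 \<le> 1"
          using sum_sq finite_B member_le_sum[of b B "\<lambda>b. (coord v b)\<^sup>2"] by simp
        then show ?thesis
          using abs_square_le_1 by blast
      next
        case False
        then have "coord v b = 0"
          using real_vector.representation_ne_zero by blast
        then show ?thesis
          by simp
      qed
      then have "coord v \<in> S"
        using sum_sq by (auto simp: S_def abs_le_iff)
      moreover have "v = ?lincomb (coord v)"
        by (simp add: lincomb_coord)
      ultimately show "v \<in> ?lincomb ` S"
        by blast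
    qed
  qed
  moreover have "compact (?lincomb ` S)"
    using compact_continuous_image[OF continuous_on_subset[OF continuous_lincomb] compact_S] by simp
  ultimately show ?thesis
    by simp
qed

lemma coord_norm_normalize: "v \<noteq> 0 \<Longrightarrow> coord_norm (inverse (coord_norm v) *\<^sub>R v) = 1"
  using coord_norm_pos[of v] by (simp add: coord_norm_scaleR)

definition norm_ratio_minimal :: "'a \<Rightarrow> bool" where
  "norm_ratio_minimal x \<longleftrightarrow> (\<forall>v. norm x * coord_norm v \<le> coord_norm x * norm v)"

definition norm_ratio_maximal :: "'a \<Rightarrow> bool" where
  "norm_ratio_maximal y \<longleftrightarrow> (\<forall>v. coord_norm y * norm v \<le> norm y * coord_norm v)"

lemma coord_norm_sphere_nonempty:
  assumes "B \<noteq> {}"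
  shows "{v. coord_norm v = 1} \<noteq> {}"
proof -
  obtain b where "b \<in> B"
    using assms by blast
  then have "b \<noteq> 0"
    using independent_B real_vector.dependent_zero by blast
  then show ?thesis
    using coord_norm_normalize by blast
qed

lemma exists_norm_ratio_minimal:
  assumes "B \<noteq> {}"
  shows "\<exists>x. coord_norm x = 1 \<and> norm_ratio_minimal x"
proof -
  obtain x where x: "coord_norm x = 1" and min: "\<And>u. coord_norm u = 1 \<Longrightarrow> norm x \<le> norm u"
    using continuous_attains_inf[OF compact_coord_norm_sphere coord_norm_sphere_nonempty[OF assms],
        of norm] continuous_on_norm_id by blast
  have "norm x * coord_norm v \<le> norm v" for v
  proof (cases "v = 0")
    case False
    then have "norm x \<le> norm (inverse (coord_norm v) *\<^sub>R v)"
      by (intro min coord_norm_normalize)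
    then show ?thesis
      using coord_norm_pos[OF False] by (simp add: field_simps)
  qed simp
  then show ?thesis
    using x by (auto simp: norm_ratio_minimal_def)
qed

lemma exists_norm_ratio_maximal:
  assumes "B \<noteq> {}"
  shows "\<exists>y. coord_norm y = 1 \<and> norm_ratio_maximal y"
proof -
  obtain y where y: "coord_norm y = 1" and max: "\<And>u. coord_norm u = 1 \<Longrightarrow> norm u \<le> norm y"
    using continuous_attains_sup[OF compact_coord_norm_sphere coord_norm_sphere_nonempty[OF assms],
        of norm] continuous_on_norm_id by blast
  have "norm v \<le> norm y * coord_norm v" for v
  proof (cases "v = 0")
    case False
    then have "norm (inverse (coord_norm v) *\<^sub>R v) \<le> norm y"
      by (intro max coord_norm_normalize)
    then show ?thesis
      using coord_norm_pos[OF False] by (simp add: field_simps)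
  qed simp
  then show ?thesis
    using y by (auto simp: norm_ratio_maximal_def)
qed

lemma norm_ratio_minimal_scaleR: "norm_ratio_minimal x \<Longrightarrow> norm_ratio_minimal (a *\<^sub>R x)"
  by (simp add: norm_ratio_minimal_def coord_norm_scaleR mult.assoc mult_left_mono)

lemma norm_ratio_maximal_scaleR: "norm_ratio_maximal y \<Longrightarrow> norm_ratio_maximal (a *\<^sub>R y)"
  by (simp add: norm_ratio_maximal_def coord_norm_scaleR mult.assoc mult_left_mono)

lemma norm_ratio_maximal_everywhere:
  assumes "norm_ratio_minimal y" "norm_ratio_maximal y" "y \<noteq> 0"
  shows "norm_ratio_maximal v"
proof -
  have "norm u * coord_norm y = norm y * coord_norm u" for u
  proof -
    have "norm y * coord_norm u \<le> coord_norm y * norm u" "coord_norm y * norm u \<le> norm y * coord_norm u"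
      using assms(1,2) by (auto simp: norm_ratio_minimal_def norm_ratio_maximal_def)
    then show ?thesis
      by (simp add: mult.commute)
  qed
  then have "coord_norm v * norm u * coord_norm y = norm v * coord_norm u * coord_norm y" for u
    by (metis mult.commute mult.left_commute)
  then show ?thesis
    using coord_norm_pos[OF assms(3)] by (simp add: norm_ratio_maximal_def)
qed

lemma exists_coord_inner_orthogonal:
  assumes "2 \<le> card B"
  shows "\<exists>v. v \<noteq> 0 \<and> coord_inner u v = 0"
proof -
  obtain b1 b2 where b: "b1 \<in> B" "b2 \<in> B" "b1 \<noteq> b2"
    using assms card_le_Suc0_iff_eq[OF finite_B] by (metis not_less_eq_eq numeral_2_eq_2)
  have coord_inner_b: "coord_inner b1 b2 = 0" "coord_inner b2 b2 = 1"
    using b independent_B by (simp_all add: coord_inner_basis_right real_vector.representation_basis)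
  show ?thesis
  proof (cases "coord u b1 = 0")
    case True
    then show ?thesis
      using b independent_B coord_inner_basis_right real_vector.dependent_zero by metis
  next
    case False
    define v where "v = coord u b2 *\<^sub>R b1 + (- coord u b1) *\<^sub>R b2"
    have "coord_inner v b2 = - coord u b1"
      unfolding v_def coord_inner_add_left coord_inner_scaleR_left coord_inner_b by simp
    then have "v \<noteq> 0"
      using False by (auto simp: coord_inner_def real_vector.representation_zero)
    moreover have "coord_inner u v = 0"
      unfolding v_def coord_inner_add_right coord_inner_scaleR_right coord_inner_basis_right[OF b(1)]
        coord_inner_basis_right[OF b(2)] by simp
    ultimately show ?thesis
      by blast
  qed
qed

lemma exists_unit_coord_inner_orthogonal:
  assumes "2 \<le> card B"
  shows "\<exists>z. norm z = 1 \<and> coord_inner u z = 0"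
proof -
  obtain v where "v \<noteq> 0" "coord_inner u v = 0"
    using exists_coord_inner_orthogonal[OF assms] by blast
  then show ?thesis
    by (intro exI[of _ "inverse (norm v) *\<^sub>R v"]) (simp add: coord_inner_scaleR_right)
qed

lemma coord_norm_orthogonal_combination_ratio:
  assumes "coord_inner u v = 0" "u \<noteq> 0"
  shows "coord_norm (a *\<^sub>R u + b *\<^sub>R v) / coord_norm u
    = sqrt (a\<^sup>2 + (b * (coord_norm v / coord_norm u))\<^sup>2)"
proof -
  have "coord_norm u > 0"
    using assms(2) by (rule coord_norm_pos)
  then have "a\<^sup>2 * (coord_norm u)\<^sup>2 + b\<^sup>2 * (coord_norm v)\<^sup>2
      = (a\<^sup>2 + (b * (coord_norm v / coord_norm u))\<^sup>2) * (coord_norm u)\<^sup>2"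
    by (simp add: power_mult_distrib power_divide field_simps)
  then show ?thesis
    using \<open>coord_norm u > 0\<close>
    by (simp add: coord_norm_orthogonal_combination[OF assms(1)] real_sqrt_mult)
qed

lemma norm_ratio_minimal_lower_bound:
  assumes "norm_ratio_minimal x" "norm x = 1"
  shows "coord_norm v / coord_norm x \<le> norm v"
proof -
  have "coord_norm v \<le> coord_norm x * norm v"
    using assms by (simp add: norm_ratio_minimal_def)
  moreover have "coord_norm x > 0"
    using assms(2) coord_norm_pos by force
  ultimately show ?thesis
    by (simp add: divide_le_eq mult.commute)
qed

lemma norm_ratio_maximal_upper_bound:
  assumes "norm_ratio_maximal y" "norm y = 1"
  shows "norm v \<le> coord_norm v / coord_norm y"
proof -
  have "coord_norm y * norm v \<le> coord_norm v"
    using assms by (simp add: norm_ratio_maximal_def)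
  moreover have "coord_norm y > 0"
    using assms(2) coord_norm_pos by force
  ultimately show ?thesis
    by (simp add: le_divide_eq mult.commute)
qed

lemma birkhoff_orth_if_norm_ratio_minimal:
  assumes "norm_ratio_minimal x" "x \<noteq> 0" "coord_inner x z = 0"
  shows "birkhoff_orth x z"
  unfolding birkhoff_orth_def
proof
  fix t :: real
  have "coord_norm x = sqrt ((coord_norm x)\<^sup>2)"
    using coord_norm_pos[OF assms(2)] by simp
  also have "\<dots> \<le> sqrt (1\<^sup>2 * (coord_norm x)\<^sup>2 + t\<^sup>2 * (coord_norm z)\<^sup>2)"
    by (intro real_sqrt_le_mono) simp
  also have "\<dots> = coord_norm (1 *\<^sub>R x + t *\<^sub>R z)"
    by (rule coord_norm_orthogonal_combination[OF assms(3), symmetric])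
  finally have "coord_norm x \<le> coord_norm (1 *\<^sub>R x + t *\<^sub>R z)" .
  then have "norm x * coord_norm x \<le> coord_norm x * norm (x + t *\<^sub>R z)"
    using assms(1) unfolding norm_ratio_minimal_def
    by (metis order_trans mult_left_mono norm_ge_zero scaleR_one)
  then show "norm x \<le> norm (x + t *\<^sub>R z)"
    using coord_norm_pos[OF assms(2)] by (simp add: mult.commute)
qed

lemma support_functional_vanishes_if_norm_ratio_maximal:
  assumes "norm_ratio_maximal y" "norm y = 1" "support_functional y f" "coord_inner y w = 0"
  shows "f w = 0"
proof (rule slope_eq_0_if_below_hyperbola)
  fix t :: real
  have "y \<noteq> 0"
    using assms(2) by auto
  have "1 + t * f w = f (y + t *\<^sub>R w)"
    using assms(3) by (simp add: support_functional_def linear_add linear_scale)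
  also have "\<dots> \<le> norm (y + t *\<^sub>R w)"
    using assms(3) abs_le_D1 by (auto simp: support_functional_def)
  also have "\<dots> \<le> coord_norm (1 *\<^sub>R y + t *\<^sub>R w) / coord_norm y"
    using norm_ratio_maximal_upper_bound[OF assms(1,2)] by simp
  also have "\<dots> = sqrt (1 + (t * (coord_norm w / coord_norm y))\<^sup>2)"
    using coord_norm_orthogonal_combination_ratio[OF assms(4) \<open>y \<noteq> 0\<close>, of 1 t] by simp
  finally show "1 + t * f w \<le> sqrt (1 + (t * (coord_norm w / coord_norm y))\<^sup>2)" .
qed

lemma weak_CPP_if_norm_ratio_extremal:
  assumes x: "norm x = 1" "norm_ratio_minimal x" "birkhoff_orth x z" "norm z = 1" "coord_inner x z = 0"
    and y: "norm y = 1" "norm_ratio_maximal y" "birkhoff_orth y w" "norm w = 1" "coord_inner y w = 0"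
  shows "weak_CPP x y"
proof -
  have nonzero: "x \<noteq> 0" "y \<noteq> 0" "z \<noteq> 0" "w \<noteq> 0"
    using x y by auto
  define \<mu> where "\<mu> = (coord_norm z / coord_norm x) / (coord_norm w / coord_norm y)"
  have "\<mu> > 0"
    using nonzero by (simp add: \<mu>_def coord_norm_pos)
  have "norm (a *\<^sub>R y + b *\<^sub>R (\<mu> *\<^sub>R w)) \<le> 1" if "norm (a *\<^sub>R x + b *\<^sub>R z) = 1" for a b
  proof -
    have "norm (a *\<^sub>R y + (b * \<mu>) *\<^sub>R w)
        \<le> coord_norm (a *\<^sub>R y + (b * \<mu>) *\<^sub>R w) / coord_norm y"
      by (rule norm_ratio_maximal_upper_bound[OF y(2,1)])
    also have "\<dots> = sqrt (a\<^sup>2 + (b * (coord_norm z / coord_norm x))\<^sup>2)"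
      using coord_norm_orthogonal_combination_ratio[OF y(5) nonzero(2)] coord_norm_pos[OF nonzero(4)]
        coord_norm_pos[OF nonzero(2)] by (simp add: \<mu>_def)
    also have "\<dots> = coord_norm (a *\<^sub>R x + b *\<^sub>R z) / coord_norm x"
      using coord_norm_orthogonal_combination_ratio[OF x(5) nonzero(1)] by simp
    also have "\<dots> \<le> norm (a *\<^sub>R x + b *\<^sub>R z)"
      by (rule norm_ratio_minimal_lower_bound[OF x(2,1)])
    finally show ?thesis
      using that by simp
  qed
  \<comment> \<open>The estimate holds on the whole unit circle of span {x, z}, so any radius r will do.\<close>
  then show ?thesis
    unfolding weak_CPP_def using x(3,4) y(3,4) \<open>\<mu> > 0\<close>
    by (intro exI[of _ z] exI[of _ w] exI[of _ 1] exI[of _ \<mu>]) auto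
qed

lemma exists_weak_CPP_pair:
  assumes "2 \<le> card B"
    and support: "\<And>y::'a. norm y = 1 \<Longrightarrow> \<exists>f. support_functional y f"
  shows "\<exists>x y::'a. norm x = 1 \<and> norm y = 1 \<and> y \<noteq> x \<and> y \<noteq> - x \<and> weak_CPP x y"
proof -
  have "B \<noteq> {}"
    using assms(1) by auto
  obtain x0 where x0: "coord_norm x0 = 1" "norm_ratio_minimal x0"
    using exists_norm_ratio_minimal[OF \<open>B \<noteq> {}\<close>] by blast
  obtain y0 where y0: "coord_norm y0 = 1" "norm_ratio_maximal y0"
    using exists_norm_ratio_maximal[OF \<open>B \<noteq> {}\<close>] by blast
  define x where "x = inverse (norm x0) *\<^sub>R x0"
  define y1 where "y1 = inverse (norm y0) *\<^sub>R y0"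
  have "x0 \<noteq> 0" "y0 \<noteq> 0"
    using x0(1) y0(1) by auto
  then have x: "norm x = 1" "norm_ratio_minimal x" and y1: "norm y1 = 1" "norm_ratio_maximal y1"
    using x0(2) y0(2) norm_ratio_minimal_scaleR norm_ratio_maximal_scaleR
    by (simp_all add: x_def y1_def)
  obtain y where y: "norm y = 1" "norm_ratio_maximal y" "y \<noteq> x" "y \<noteq> - x"
  proof (cases "norm_ratio_minimal y1")
    case True
    obtain y where "norm y = 1" "coord_inner x y = 0"
      using exists_unit_coord_inner_orthogonal[OF assms(1)] by blast
    moreover have "coord_inner x x \<noteq> 0" "coord_inner x (- x) \<noteq> 0"
      using x(1) coord_inner_self_eq_0[of x] coord_inner_scaleR_right[of x "-1" x] by auto
    moreover have "norm_ratio_maximal y"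
      using norm_ratio_maximal_everywhere True y1 by force
    ultimately show ?thesis
      using that by metis
  next
    case False
    then have "y1 \<noteq> x" "y1 \<noteq> - x"
      using x(2) norm_ratio_minimal_scaleR[of x "-1"] by auto
    then show ?thesis
      using that y1 by blast
  qed
  obtain z where z: "norm z = 1" "coord_inner x z = 0"
    using exists_unit_coord_inner_orthogonal[OF assms(1)] by blast
  obtain w where w: "norm w = 1" "coord_inner y w = 0"
    using exists_unit_coord_inner_orthogonal[OF assms(1)] by blast
  obtain f where f: "support_functional y f"
    using support[OF y(1)] by blast
  have "birkhoff_orth x z"
    using birkhoff_orth_if_norm_ratio_minimal x z by force
  moreover have "birkhoff_orth y w"
    using birkhoff_orth_if_support_functional[OF f y(1)]
      support_functional_vanishes_if_norm_ratio_maximal[OF y(2,1) f w(2)] by blast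
  ultimately have "weak_CPP x y"
    using weak_CPP_if_norm_ratio_extremal x y z w by blast
  then show ?thesis
    using x(1) y(1,3,4) by blast
qed

end

theorem mainTheorem3:
  assumes findim: "\<exists>B::'a::banach set. finite B \<and> span B = UNIV"
    and dim2: "dim (UNIV::'a set) \<ge> 2"
    and smooth: "smooth_space TYPE('a)"
  shows "\<exists>x y::'a. norm x = 1 \<and> norm y = 1 \<and> y \<noteq> x \<and> y \<noteq> - x \<and> weak_CPP x y"
proof -
  obtain S :: "'a set" where S: "finite S" "span S = UNIV"
    using findim by blast
  obtain B where B: "B \<subseteq> S" "independent B" "S \<subseteq> span B"
    by (rule maximal_independent_subset)
  have span_B: "span B = UNIV"
    using B(3) S(2) span_minimal[of S "span B"] by auto
  interpret finite_basis B
    using B S(1) span_B finite_subset by unfold_locales auto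
  have "2 \<le> card B"
    using dim2 dim_span_eq_card_independent[OF B(2)] span_B by simp
  moreover have "\<And>y::'a. norm y = 1 \<Longrightarrow> \<exists>f. support_functional y f"
    using smooth unfolding smooth_space_def by (meson ex1_implies_ex)
  ultimately show ?thesis
    by (rule exists_weak_CPP_pair)
qed

end
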